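(* Let $n$ be a power of two, and let $\mathcal{C}\subseteq\{0,1\}^n$ be a code as described in the context. There is a map $W$ assigning to each string $y\in\{0,1\}^{n-1}\cup\{0,1\}^n$ a set $W(y)\subseteq\{1,\dots,n\}$ with $|W(y)|\le 10^{10}\log^4 n$ such that for every $x\in\mathcal{C}$: (a) if $y$ is obtained from $x$ by one deletion, then $W(y)$ contains an index $p$ such that deleting $x_p$ from $x$ yields $y$; (b) if $y\neq x$ is obtained from $x$ by one adjacent transposition of positions $k,k+1$, then $k\in W(y)$.
   Context: Logarithms are base $2$. Set $\Delta=50+1000\log n$ and $m=1000\Delta^2$. Marker segmentation: for $x\in\{0,1\}^n$ ending in $0011$, write $x=z^x_1\|z^x_2\|\cdots\|z^x_{\ell_x}$ where each $z^x_j$ ends with $0011$ and contains exactly one occurrence of $0011$ as a substring (so $\ell_x$ is the number of occurrences of $0011$ in $x$). Let $h:\{0,1\}^{\le 3\Delta}\to\{0,\dots,m-1\}$ be a function such that $h(z)\ne h(z')$ whenever $z'\neq z$ is obtained from $z$ by at most two adjacent transpositions, or at most two substitutions, or at most one deletion together with at most one insertion. Define $f(x)=\sum_{j=1}^{\ell_x} j\,(|z^x_j|\cdot m+h(z^x_j)) \bmod (10n\Delta m+1)$, $g_1(x)=\ell_x\bmod 5$, $g_2(x)=\sum_{i=1}^n \overline{x}_i \bmod 3$ where $\overline{x}_i=\sum_{j=1}^i x_j \bmod 2$. For fixed $s_0,s_1,s_2$ let $\mathcal{C}'=\{x\in\{0,1\}^n: (x_{n-3},x_{n-2},x_{n-1},x_n)=(0,0,1,1),\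 f(x)=s_0,\ g_1(x)=s_1,\ g_2(x)=s_2,\ |z^x_j|\le\Delta \text{ for all } j\}$. The hash multiset of $x$ is $H_x=\{\{h(z^x_1),\dots,h(z^x_{\ell_x})\}\}$; for multisets, $|S\triangle T|=\sum_v|\mathrm{mult}_S(v)-\mathrm{mult}_T(v)|$. The code $\mathcal{C}$ is a subset of $\mathcal{C}'$ (for some $s_0,s_1,s_2$) such that for all $x,x'\in\mathcal{C}$, either $H_x=H_{x'}$ or $|H_x\triangle H_{x'}|\ge 10$. Deletion and adjacent transposition are as usual (a transposition swaps $x_k,x_{k+1}$). *)

theory Defs
  imports Complex_Main "HOL-Library.Multiset"
begin

(* Binary strings are bool lists; False = 0, True = 1; positions are 1-based. *)

definition Delta :: "nat \<Rightarrow> real" where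
  "Delta n = 50 + 1000 * log 2 (real n)"

definition mreal :: "nat \<Rightarrow> real" where
  "mreal n = 1000 * (Delta n)^2"

(* m and the modulus as natural numbers (exact when n is a power of two) *)
definition mnat :: "nat \<Rightarrow> nat" where
  "mnat n = nat \<lfloor>mreal n\<rfloor>"

definition fmod :: "nat \<Rightarrow> nat" where
  "fmod n = nat \<lfloor>10 * real n * Delta n * mreal n + 1\<rfloor>"

definition marker :: "bool list" where
  "marker = [False, False, True, True]"

definition marker_ends :: "bool list \<Rightarrow> nat list" where
  "marker_ends x = sorted_list_of_set
     {i. 4 \<le> i \<and> i \<le> length x \<and> drop (i - 4) (take i x) = marker}"

definition ell :: "bool list \<Rightarrow> nat" where
  "ell x = length (marker_ends x)"

definition segs :: "bool list \<Rightarrow> bool list list" where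
  "segs x = map2 (\<lambda>a b. drop a (take b x)) (0 # marker_ends x) (marker_ends x)"

definition f_sk :: "nat \<Rightarrow> (bool list \<Rightarrow> nat) \<Rightarrow> bool list \<Rightarrow> nat" where
  "f_sk n h x = (\<Sum>j = 1..ell x. j * (length (segs x ! (j - 1)) * mnat n + h (segs x ! (j - 1))))
                 mod fmod n"

definition g1 :: "bool list \<Rightarrow> nat" where
  "g1 x = ell x mod 5"

definition prefix_parity :: "bool list \<Rightarrow> nat \<Rightarrow> nat" where
  "prefix_parity x i = (\<Sum>j = 1..i. of_bool (x ! (j - 1))) mod 2"

definition g2 :: "bool list \<Rightarrow> nat" where
  "g2 x = (\<Sum>i = 1..length x. prefix_parity x i) mod 3"

definition Cprime :: "nat \<Rightarrow> (bool list \<Rightarrow> nat) \<Rightarrow> nat \<Rightarrow> nat \<Rightarrow> nat \<Rightarrow> bool list set" where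
  "Cprime n h s0 s1 s2 = {x. length x = n \<and> n \<ge> 4 \<and> drop (n - 4) x = marker
      \<and> f_sk n h x = s0 \<and> g1 x = s1 \<and> g2 x = s2
      \<and> (\<forall>z \<in> set (segs x). real (length z) \<le> Delta n)}"

definition hash_mset :: "(bool list \<Rightarrow> nat) \<Rightarrow> bool list \<Rightarrow> nat multiset" where
  "hash_mset h x = image_mset h (mset (segs x))"

definition mset_symdiff_size :: "'a multiset \<Rightarrow> 'a multiset \<Rightarrow> nat" where
  "mset_symdiff_size S T = size (S - T) + size (T - S)"

definition del_at :: "bool list \<Rightarrow> nat \<Rightarrow> bool list" where
  "del_at x p = take (p - 1) x @ drop p x"

definition ins_at :: "bool list \<Rightarrow> nat \<Rightarrow> bool \<Rightarrow> bool list" where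
  "ins_at x p b = take (p - 1) x @ b # drop (p - 1) x"

definition swap_at :: "bool list \<Rightarrow> nat \<Rightarrow> bool list" where
  "swap_at x k = x[k - 1 := x ! k, k := x ! (k - 1)]"

definition adj_trans_step :: "bool list \<Rightarrow> bool list \<Rightarrow> bool" where
  "adj_trans_step z z' \<longleftrightarrow> (\<exists>k. 1 \<le> k \<and> k < length z \<and> z' = swap_at z k)"

definition le2_adj_trans :: "bool list \<Rightarrow> bool list \<Rightarrow> bool" where
  "le2_adj_trans z z' \<longleftrightarrow> z' = z \<or> adj_trans_step z z'
      \<or> (\<exists>w. adj_trans_step z w \<and> adj_trans_step w z')"

definition hamming :: "bool list \<Rightarrow> bool list \<Rightarrow> nat" where
  "hamming z z' = card {i. i < length z \<and> z ! i \<noteq> z' ! i}"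

definition le2_subst :: "bool list \<Rightarrow> bool list \<Rightarrow> bool" where
  "le2_subst z z' \<longleftrightarrow> length z' = length z \<and> hamming z z' \<le> 2"

definition le1_del :: "bool list \<Rightarrow> bool list \<Rightarrow> bool" where
  "le1_del z w \<longleftrightarrow> w = z \<or> (\<exists>p. 1 \<le> p \<and> p \<le> length z \<and> w = del_at z p)"

definition le1_ins :: "bool list \<Rightarrow> bool list \<Rightarrow> bool" where
  "le1_ins w z' \<longleftrightarrow> z' = w \<or> (\<exists>p b. 1 \<le> p \<and> p \<le> length w + 1 \<and> z' = ins_at w p b)"

definition le1_del_ins :: "bool list \<Rightarrow> bool list \<Rightarrow> bool" where
  "le1_del_ins z z' \<longleftrightarrow> (\<exists>w. le1_del z w \<and> le1_ins w z')"

definition good_hash :: "nat \<Rightarrow> (bool list \<Rightarrow> nat) \<Rightarrow> bool" where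
  "good_hash n h \<longleftrightarrow>
     (\<forall>z. real (length z) \<le> 3 * Delta n \<longrightarrow> real (h z) \<le> mreal n - 1) \<and>
     (\<forall>z z'. real (length z) \<le> 3 * Delta n \<longrightarrow> real (length z') \<le> 3 * Delta n \<longrightarrow> z' \<noteq> z \<longrightarrow>
        (le2_adj_trans z z' \<or> le2_subst z z' \<or> le1_del_ins z z') \<longrightarrow> h z \<noteq> h z')"

definition is_code :: "nat \<Rightarrow> (bool list \<Rightarrow> nat) \<Rightarrow> bool list set \<Rightarrow> bool" where
  "is_code n h C \<longleftrightarrow> (\<exists>s0 s1 s2. C \<subseteq> Cprime n h s0 s1 s2) \<and>
     (\<forall>x \<in> C. \<forall>x' \<in> C. hash_mset h x = hash_mset h x' \<or>
         mset_symdiff_size (hash_mset h x) (hash_mset h x') \<ge> 10)"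

end

theory Submission
  imports Defs
begin

text \<open>For a string \<open>y\<close>, let \<open>W(y)\<close> be the set of positions at which some codeword can be turned
  into \<open>y\<close> by a swap, or by deleting the first bit of a run of \<open>0\<close>s or the last bit of a run of
  \<open>1\<close>s. Such an edit only replaces a block of at most three consecutive marker segments. For two
  codewords edited into the same \<open>y\<close> the hash multisets are therefore at distance at most \<open>8\<close>,
  hence equal; so the numbers and total weights of their segments agree, and the congruence on
  \<open>f\<close> becomes an equality because all remaining terms are local and small. The resulting balance
  equation forces the two edit positions to be \<open>O(\<Delta>)\<close> apart, so \<open>|W(y)| = O(log n)\<close>.\<close>

section \<open>Marker occurrences and segmentation\<close>

definition marker_at :: "bool list \<Rightarrow> nat \<Rightarrow> bool" where
  "marker_at x i \<longleftrightarrow> 4 \<le> i \<and> i \<le> length x \<and> \<not> x!(i-4) \<and> \<not> x!(i-3) \<and> x!(i-2) \<and> x!(i-1)"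

lemma drop_take_4_eq_nths:
  assumes "4 \<le> i" "i \<le> length x"
  shows "drop (i-4) (take i x) = [x!(i-4), x!(i-3), x!(i-2), x!(i-1)]"
proof (rule nth_equalityI)
  fix k assume "k < length (drop (i-4) (take i x))"
  then have "k = 0 \<or> k = 1 \<or> k = 2 \<or> k = 3" using assms by auto
  moreover have "i-4+1 = i-3" "i-4+2 = i-2" "i-4+3 = i-1" using assms by auto
  ultimately show "drop (i-4) (take i x) ! k = [x!(i-4), x!(i-3), x!(i-2), x!(i-1)] ! k"
    using assms by auto
qed (use assms in simp)

lemma marker_ends_eq: "marker_ends x = sorted_list_of_set {i. marker_at x i}"
proof -
  have "(4 \<le> i \<and> i \<le> length x \<and> drop (i-4) (take i x) = marker) \<longleftrightarrow> marker_at x i" for i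
    using drop_take_4_eq_nths[of i x] by (auto simp: marker_at_def marker_def)
  then show ?thesis unfolding marker_ends_def by simp
qed

lemma marker_at_length_iff:
  "4 \<le> length x \<Longrightarrow> marker_at x (length x) \<longleftrightarrow> drop (length x - 4) x = marker"
  using drop_take_4_eq_nths[of "length x" x] by (auto simp: marker_at_def marker_def)

lemma finite_marker_at [simp]: "finite {i. marker_at x i}"
  by (rule finite_subset[of _ "{..length x}"]) (auto simp: marker_at_def)

lemma marker_at_ge_4: "marker_at x i \<Longrightarrow> 4 \<le> i"
  and marker_at_le_length: "marker_at x i \<Longrightarrow> i \<le> length x"
  by (simp_all add: marker_at_def)

lemma marker_at_gap:
  assumes "marker_at x i" "marker_at x j" "i < j"
  shows "i + 4 \<le> j"
proof (rule ccontr)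
  assume "\<not> i + 4 \<le> j"
  then have "j = i+1 \<or> j = i+2 \<or> j = i+3" using assms(3) by auto
  then show False using assms(1,2) by (auto simp: marker_at_def numeral_eq_Suc)
qed

lemma marker_at_take: "marker_at (take b x) i \<longleftrightarrow> marker_at x i \<and> i \<le> b"
  unfolding marker_at_def by auto

lemma marker_at_drop: "marker_at (drop a x) i \<longleftrightarrow> 4 \<le> i \<and> marker_at x (a + i)"
proof -
  have "4 \<le> i \<Longrightarrow> a + i - 4 = a + (i - 4) \<and> a + i - 3 = a + (i - 3) \<and>
      a + i - 2 = a + (i - 2) \<and> a + i - 1 = a + (i - 1)"
    by auto
  then show ?thesis unfolding marker_at_def by auto
qed

definition ends_marker :: "bool list \<Rightarrow> bool" where
  "ends_marker x \<longleftrightarrow> x = [] \<or> marker_at x (length x)"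

lemma marker_at_append:
  assumes "ends_marker P"
  shows "marker_at (P @ Q) i \<longleftrightarrow> marker_at P i \<or> (length P + 4 \<le> i \<and> marker_at Q (i - length P))"
proof (cases "i \<le> length P")
  case True
  then show ?thesis using marker_at_take[of "length P" "P @ Q" i] by auto
next
  case False
  show ?thesis
  proof (cases "length P + 4 \<le> i")
    case True
    then show ?thesis
      using False marker_at_drop[of "length P" "P @ Q" "i - length P"] marker_at_le_length[of P i]
      by auto
  next
    case close: False
    have "\<not> marker_at (P @ Q) i"
    proof
      assume i: "marker_at (P @ Q) i"
      show False
      proof (cases "P = []")
        case True
        then show False using i close marker_at_ge_4 by fastforce
      next
        case False
        then have "marker_at (P @ Q) (length P)"
          using assms marker_at_take[of "length P" "P @ Q"] by (simp add: ends_marker_def)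
        then show False using marker_at_gap[OF _ i] \<open>\<not> i \<le> length P\<close> close by force
      qed
    qed
    then show ?thesis using False close marker_at_le_length by fastforce
  qed
qed

lemma marker_at_append_set:
  assumes "ends_marker P"
  shows "{i. marker_at (P @ Q) i} = {i. marker_at P i} \<union> (\<lambda>j. j + length P) ` {j. marker_at Q j}"
proof (intro set_eqI iffI)
  fix i assume "i \<in> {i. marker_at (P @ Q) i}"
  moreover have "i = (i - length P) + length P" if "length P + 4 \<le> i"
    using that by simp
  ultimately show "i \<in> {i. marker_at P i} \<union> (\<lambda>j. j + length P) ` {j. marker_at Q j}"
    unfolding mem_Collect_eq marker_at_append[OF assms] by blast
next
  fix i assume "i \<in> {i. marker_at P i} \<union> (\<lambda>j. j + length P) ` {j. marker_at Q j}"
  then show "i \<in> {i. marker_at (P @ Q) i}"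
    using marker_at_ge_4[of Q] by (auto simp: marker_at_append[OF assms])
qed

lemma sorted_list_of_set_Un_less:
  fixes A B :: "nat set"
  assumes "finite A" "finite B" "\<forall>a\<in>A. \<forall>b\<in>B. a < b"
  shows "sorted_list_of_set (A \<union> B) = sorted_list_of_set A @ sorted_list_of_set B"
  by (rule sorted_distinct_set_unique) (use assms in \<open>auto simp: sorted_append less_imp_le\<close>)

lemma sorted_list_of_set_image_add:
  fixes B :: "nat set"
  assumes "finite B"
  shows "sorted_list_of_set ((\<lambda>j. j + c) ` B) = map (\<lambda>j. j + c) (sorted_list_of_set B)"
  by (rule sorted_distinct_set_unique) (use assms in \<open>auto simp: sorted_map distinct_map\<close>)

lemma marker_ends_append:
  assumes "ends_marker P"
  shows "marker_ends (P @ Q) = marker_ends P @ map (\<lambda>j. j + length P) (marker_ends Q)"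
proof -
  have "\<forall>a\<in>{i. marker_at P i}. \<forall>b\<in>(\<lambda>j. j + length P) ` {j. marker_at Q j}. a < b"
    using marker_at_le_length[of P] marker_at_ge_4[of Q] by fastforce
  then show ?thesis
    unfolding marker_ends_eq marker_at_append_set[OF assms]
    by (simp add: sorted_list_of_set_Un_less sorted_list_of_set_image_add)
qed

lemma last_marker_ends:
  assumes "ends_marker P"
  shows "last (0 # marker_ends P) = length P"
proof (cases "P = []")
  case True
  then show ?thesis by (simp add: marker_ends_eq marker_at_def)
next
  case False
  then have P: "marker_at P (length P)" using assms by (simp add: ends_marker_def)
  have "{i. marker_at P i} = ({i. marker_at P i} - {length P}) \<union> {length P}" using P by auto
  then have "marker_ends P = sorted_list_of_set (({i. marker_at P i} - {length P}) \<union> {length P})"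
    unfolding marker_ends_eq by (rule arg_cong)
  also have "\<dots> = sorted_list_of_set ({i. marker_at P i} - {length P}) @ [length P]"
    using marker_at_le_length[of P] by (subst sorted_list_of_set_Un_less) (force simp: not_less)+
  finally show ?thesis by simp
qed

fun cut_segments :: "bool list \<Rightarrow> nat \<Rightarrow> nat list \<Rightarrow> bool list list" where
  "cut_segments x a [] = []"
| "cut_segments x a (e # E) = drop a (take e x) # cut_segments x e E"

lemma segs_eq_cut_segments: "segs x = cut_segments x 0 (marker_ends x)"
proof -
  have "map2 (\<lambda>a b. drop a (take b x)) (a # E) E = cut_segments x a E" for a E
    by (induction E arbitrary: a) auto
  then show ?thesis unfolding segs_def by simp
qed

lemma cut_segments_append:
  "cut_segments x a (E1 @ E2) = cut_segments x a E1 @ cut_segments x (last (a # E1)) E2"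
  by (induction E1 arbitrary: a) auto

lemma cut_segments_append_left:
  "\<forall>e\<in>set E. e \<le> length P \<Longrightarrow> cut_segments (P @ Q) a E = cut_segments P a E"
  by (induction E arbitrary: a) auto

lemma cut_segments_append_right:
  "cut_segments (P @ Q) (a + length P) (map (\<lambda>j. j + length P) E) = cut_segments Q a E"
proof (induction E arbitrary: a)
  case (Cons e E)
  have "take (e + length P) (P @ Q) = P @ take e Q" by simp
  then show ?case using Cons by simp
qed simp

lemma segs_append:
  assumes "ends_marker P"
  shows "segs (P @ Q) = segs P @ segs Q"
proof -
  have "segs (P @ Q) = cut_segments (P @ Q) 0 (marker_ends P)
      @ cut_segments (P @ Q) (0 + length P) (map (\<lambda>j. j + length P) (marker_ends Q))"
    unfolding segs_eq_cut_segments marker_ends_append[OF assms] cut_segments_append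
      last_marker_ends[OF assms] by simp
  also have "\<dots> = segs P @ segs Q"
    unfolding segs_eq_cut_segments cut_segments_append_right
    by (subst cut_segments_append_left) (auto simp: marker_ends_eq marker_at_le_length)
  finally show ?thesis .
qed

lemma ell_eq_length_segs: "ell x = length (segs x)"
  unfolding ell_def segs_def by simp

lemma cut_segments_lengths:
  assumes "sorted_wrt (\<lambda>u v. u + 4 \<le> v) (a # E)" "\<forall>e\<in>set E. e \<le> length x"
  shows "sum_list (map length (cut_segments x a E)) = last (a # E) - a
    \<and> (\<forall>z\<in>set (cut_segments x a E). 4 \<le> length z)"
  using assms
proof (induction E arbitrary: a)
  case (Cons e E)
  have "e \<le> last (e # E)"
  proof (cases "E = []")
    case False
    then have "last E \<in> set E" by simp
    then show ?thesis using Cons.prems(1) by auto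
  qed simp
  then show ?case using Cons by auto
qed simp

lemma marker_ends_sorted_gap: "sorted_wrt (\<lambda>u v. u + 4 \<le> v) (0 # marker_ends x)"
proof -
  have "sorted_wrt (<) (marker_ends x)" unfolding marker_ends_eq by simp
  then have "sorted_wrt (\<lambda>u v. u + 4 \<le> v) (marker_ends x)"
    by (rule sorted_wrt_mono_rel[rotated]) (auto simp: marker_ends_eq intro: marker_at_gap)
  then show ?thesis by (auto simp: marker_ends_eq marker_at_ge_4)
qed

lemma segs_lengths:
  "sum_list (map length (segs x)) = last (0 # marker_ends x) \<and> (\<forall>z\<in>set (segs x). 4 \<le> length z)"
  using cut_segments_lengths[of 0 "marker_ends x" x] marker_ends_sorted_gap[of x]
  by (simp add: segs_eq_cut_segments marker_ends_eq marker_at_le_length)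

lemma sum_length_segs: "ends_marker x \<Longrightarrow> sum_list (map length (segs x)) = length x"
  using segs_lengths last_marker_ends by simp

lemma length_segs_ge_4: "z \<in> set (segs x) \<Longrightarrow> 4 \<le> length z"
  using segs_lengths by blast

lemma ell_le_length: "ends_marker x \<Longrightarrow> 4 * ell x \<le> length x"
  using sum_list_mono[of "segs x" "\<lambda>_. 4" length] length_segs_ge_4[of _ x] sum_length_segs[of x]
  by (simp add: ell_eq_length_segs sum_list_triv)

lemma segs_single:
  assumes "ends_marker x" "ell x = 1"
  shows "segs x = [x]"
proof -
  obtain e where e: "marker_ends x = [e]"
    using assms(2) unfolding ell_def by (auto simp: length_Suc_conv)
  then have "e = length x" using last_marker_ends[OF assms(1)] by simp
  then show ?thesis using e by (simp add: segs_eq_cut_segments)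
qed

lemma ends_marker_append: "ends_marker P \<Longrightarrow> ends_marker Q \<Longrightarrow> ends_marker (P @ Q)"
  using marker_at_append[of P Q "length (P @ Q)"] marker_at_ge_4[of Q]
  by (auto simp: ends_marker_def)

lemma ends_marker_appendD: "ends_marker (P @ Q) \<Longrightarrow> ends_marker P \<Longrightarrow> ends_marker Q"
  using marker_at_append[of P Q "length (P @ Q)"] marker_at_le_length[of P]
  by (fastforce simp: ends_marker_def)

lemma ell_pos: "ends_marker x \<Longrightarrow> x \<noteq> [] \<Longrightarrow> 1 \<le> ell x"
  unfolding ell_def marker_ends_eq ends_marker_def by (auto simp: card_gt_0_iff Suc_le_eq)

lemma ell_append: "ends_marker P \<Longrightarrow> ell (P @ Q) = ell P + ell Q"
  by (simp add: ell_eq_length_segs segs_append)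

section \<open>Segment weights\<close>

definition seg_weight :: "nat \<Rightarrow> (bool list \<Rightarrow> nat) \<Rightarrow> bool list \<Rightarrow> nat" where
  "seg_weight m h z = length z * m + h z"

definition weight_sum :: "nat \<Rightarrow> (bool list \<Rightarrow> nat) \<Rightarrow> bool list list \<Rightarrow> nat" where
  "weight_sum m h L = sum_list (map (seg_weight m h) L)"

fun index_weight :: "nat \<Rightarrow> (bool list \<Rightarrow> nat) \<Rightarrow> bool list list \<Rightarrow> nat" where
  "index_weight m h [] = 0"
| "index_weight m h (z # L) = seg_weight m h z + weight_sum m h L + index_weight m h L"

lemma weight_sum_simps [simp]:
  "weight_sum m h [] = 0"
  "weight_sum m h (z # L) = seg_weight m h z + weight_sum m h L"
  "weight_sum m h (L1 @ L2) = weight_sum m h L1 + weight_sum m h L2"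
  by (simp_all add: weight_sum_def)

lemma weight_sum_eq: "weight_sum m h L = m * sum_list (map length L) + sum_list (map h L)"
  by (induction L) (auto simp: seg_weight_def algebra_simps)

lemma index_weight_append:
  "index_weight m h (L1 @ L2)
    = index_weight m h L1 + index_weight m h L2 + length L1 * weight_sum m h L2"
  by (induction L1) (auto simp: algebra_simps)

lemma index_weight_le: "index_weight m h L \<le> length L * weight_sum m h L"
  by (induction L) (auto simp: algebra_simps)

lemma index_weight_eq_sum: "index_weight m h L = (\<Sum>j<length L. (j + 1) * seg_weight m h (L ! j))"
proof (induction L)
  case (Cons z L)
  have "(\<Sum>j<length (z # L). (j + 1) * seg_weight m h ((z # L) ! j))
      = seg_weight m h z + (\<Sum>j<length L. (j + 1) * seg_weight m h (L ! j))
        + (\<Sum>j<length L. seg_weight m h (L ! j))"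
    unfolding length_Cons sum.lessThan_Suc_shift by (simp add: sum.distrib algebra_simps)
  also have "(\<Sum>j<length L. seg_weight m h (L ! j)) = weight_sum m h L"
    unfolding weight_sum_def by (simp add: sum_list_sum_nth atLeast0LessThan)
  finally show ?case using Cons by simp
qed simp

lemma f_sk_eq_index_weight: "f_sk n h x = index_weight (mnat n) h (segs x) mod fmod n"
  unfolding f_sk_def index_weight_eq_sum ell_eq_length_segs
  by (simp add: sum.atLeast1_atMost_eq seg_weight_def)

lemma sum_hash_segs_le:
  assumes "\<forall>z\<in>set (segs x). h z < m"
  shows "sum_list (map h (segs x)) + ell x \<le> m * ell x"
proof -
  have "sum_list (map (\<lambda>z. h z + 1) (segs x)) \<le> sum_list (map (\<lambda>_. m) (segs x))"
    using assms by (intro sum_list_mono) auto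
  then show ?thesis by (simp add: sum_list_Suc sum_list_triv ell_eq_length_segs mult.commute)
qed

lemma size_hash_mset: "size (hash_mset h x) = ell x"
  by (simp add: hash_mset_def ell_eq_length_segs)

lemma weight_sum_segs:
  assumes "ends_marker x"
  shows "weight_sum m h (segs x) = m * length x + sum_mset (hash_mset h x)"
proof -
  have "sum_mset (hash_mset h x) = sum_list (map h (segs x))"
    by (simp add: hash_mset_def sum_mset_sum_list[symmetric])
  then show ?thesis using sum_length_segs[OF assms] by (simp add: weight_sum_eq)
qed

section \<open>Local edits\<close>

text \<open>The shape of a swap (\<open>M'\<close> as long as \<open>M\<close>) or a deletion (\<open>M'\<close> one shorter) at
  position \<open>q\<close>, seen on the marker segmentation: \<open>A\<close>, \<open>M\<close>, \<open>B\<close> consist of whole segments.\<close>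

definition local_edit :: "nat \<Rightarrow> (bool list \<Rightarrow> nat) \<Rightarrow> nat \<Rightarrow> bool list \<Rightarrow> bool list \<Rightarrow>
    bool list \<Rightarrow> bool list \<Rightarrow> bool list \<Rightarrow> bool list \<Rightarrow> bool" where
  "local_edit m h q x y A M M' B \<longleftrightarrow> x = A @ M @ B \<and> y = A @ M' @ B
     \<and> ends_marker A \<and> ends_marker M \<and> ends_marker M' \<and> M \<noteq> [] \<and> M' \<noteq> []
     \<and> length A < q \<and> q \<le> length A + length M \<and> ell M + ell M' \<le> 4
     \<and> ((length M = length M' \<and> ell M \<le> 3 \<and> ell M' \<le> 3)
        \<or> (length M = length M' + 1 \<and> ell M \<le> 2 \<and> ell M' \<le> 2))
     \<and> (ell M = ell M' \<longrightarrow> ell M = 1 \<and> seg_weight m h M \<noteq> seg_weight m h M')"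

definition ell_change :: "bool list \<Rightarrow> bool list \<Rightarrow> int" where
  "ell_change M M' = int (ell M) - int (ell M')"

definition weight_change :: "nat \<Rightarrow> (bool list \<Rightarrow> nat) \<Rightarrow> bool list \<Rightarrow> bool list \<Rightarrow> int" where
  "weight_change m h M M' = int (weight_sum m h (segs M)) - int (weight_sum m h (segs M'))"

definition index_change :: "nat \<Rightarrow> (bool list \<Rightarrow> nat) \<Rightarrow> bool list \<Rightarrow> bool list \<Rightarrow> int" where
  "index_change m h M M' = int (index_weight m h (segs M)) - int (index_weight m h (segs M'))"

lemma local_edit_segs:
  assumes "local_edit m h q x y A M M' B" "ends_marker x"
  shows "segs x = segs A @ segs M @ segs B" "segs y = segs A @ segs M' @ segs B"
    "ends_marker B" "ends_marker y"
proof -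
  have A: "ends_marker A" and M: "ends_marker M" and M': "ends_marker M'"
    and x: "x = A @ M @ B" and y: "y = A @ M' @ B"
    using assms(1) by (auto simp: local_edit_def)
  show "segs x = segs A @ segs M @ segs B" "segs y = segs A @ segs M' @ segs B"
    using segs_append[OF A] segs_append[OF M] segs_append[OF M'] x y by simp_all
  show B: "ends_marker B"
    using ends_marker_appendD[of "A @ M" B] ends_marker_append[OF A M] assms(2) x by simp
  show "ends_marker y" using y by (simp add: ends_marker_append A M' B)
qed

lemma local_edit_index_weight:
  assumes "local_edit m h q x y A M M' B" "ends_marker x"
  shows "int (index_weight m h (segs x)) = int (index_weight m h (segs y)) + index_change m h M M'
    + int (ell A) * weight_change m h M M' + ell_change M M' * int (weight_sum m h (segs B))"
  using local_edit_segs[OF assms]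
  by (simp add: index_weight_append ell_eq_length_segs index_change_def weight_change_def
      ell_change_def algebra_simps)

lemma local_edit_hash_mset:
  assumes "local_edit m h q x y A M M' B" "ends_marker x"
  shows "hash_mset h x + hash_mset h M' = hash_mset h y + hash_mset h M"
  using local_edit_segs[OF assms] by (simp add: hash_mset_def)

lemma local_edit_ell_pos:
  assumes "local_edit m h q x y A M M' B"
  shows "1 \<le> ell M" "1 \<le> ell M'"
  using assms ell_pos by (auto simp: local_edit_def)

lemma local_edit_ell_change_abs_le: "local_edit m h q x y A M M' B \<Longrightarrow> \<bar>ell_change M M'\<bar> \<le> 2"
  using local_edit_ell_pos[of m h q x y A M M' B] by (auto simp: local_edit_def ell_change_def)

lemma local_edit_single_segment:
  assumes "local_edit m h q x y A M M' B" "ell_change M M' = 0"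
  shows "segs M = [M]" "segs M' = [M']" "index_change m h M M' = weight_change m h M M'"
    "weight_change m h M M' \<noteq> 0"
proof -
  have "ell M = 1" "ell M' = 1" "ends_marker M" "ends_marker M'"
    and ne: "seg_weight m h M \<noteq> seg_weight m h M'"
    using assms by (auto simp: local_edit_def ell_change_def)
  then show sM: "segs M = [M]" and sM': "segs M' = [M']" using segs_single by auto
  show "index_change m h M M' = weight_change m h M M'"
    by (simp add: index_change_def weight_change_def sM sM')
  show "weight_change m h M M' \<noteq> 0" using ne by (simp add: weight_change_def sM sM')
qed

lemma ell_prefix_less:
  assumes "y = A1 @ R1" "y = A2 @ R2" "ends_marker A1" "ends_marker A2" "length A1 < length A2"
  shows "ell A1 < ell A2"
proof -
  have "A1 = take (length A1) A2"
    using assms(1,2,5) by (metis append_eq_append_conv_if less_imp_le_nat take_all_iff take_append)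
  then have A2: "A2 = A1 @ drop (length A1) A2" by (metis append_take_drop_id)
  have "ends_marker (drop (length A1) A2)" "drop (length A1) A2 \<noteq> []"
    using ends_marker_appendD[of A1 "drop (length A1) A2"] A2 assms(3-5) by simp_all
  then show ?thesis using ell_append[OF assms(3), of "drop (length A1) A2"] A2 ell_pos by fastforce
qed

lemma local_edit_changes:
  assumes "local_edit m h q x y A M M' B" "ends_marker x"
  shows "ell_change M M' = int (ell x) - int (ell y)"
    "weight_change m h M M' = int (weight_sum m h (segs x)) - int (weight_sum m h (segs y))"
  using local_edit_segs[OF assms]
  by (simp_all add: ell_change_def weight_change_def ell_eq_length_segs)

lemma weight_sum_bounds:
  assumes "ends_marker P" "\<forall>z\<in>set (segs P). h z < m"
  shows "m * length P \<le> weight_sum m h (segs P)"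
    "weight_sum m h (segs P) + ell P \<le> m * length P + m * ell P"
  using sum_hash_segs_le[OF assms(2)] sum_length_segs[OF assms(1)] by (simp_all add: weight_sum_eq)

lemma size_diff_le_of_add_eq:
  fixes X Y P Q :: "'a multiset"
  assumes "X + P = Y + Q"
  shows "size (X - Y) \<le> size Q"
proof -
  have "X - Y \<subseteq># Q"
  proof (rule mset_subset_eqI)
    fix v
    have "count X v + count P v = count Y v + count Q v" using assms by (metis count_union)
    then show "count (X - Y) v \<le> count Q v" by simp
  qed
  then show ?thesis by (rule size_mset_mono)
qed

lemma mod_eq_imp_eq:
  fixes a b M :: nat
  assumes "a mod M = b mod M" "\<bar>int a - int b\<bar> < int M"
  shows "a = b"
proof (rule ccontr)
  assume "a \<noteq> b"
  moreover have "int M dvd int a - int b"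
    using assms(1) by (metis mod_eq_dvd_iff of_nat_mod)
  ultimately show False using dvd_imp_le_int[of "int a - int b" "int M"] assms(2) by simp
qed

lemma card_le_of_diameter:
  fixes R :: "nat set"
  assumes "finite R" "\<forall>a\<in>R. \<forall>b\<in>R. b \<le> a + c"
  shows "card R \<le> c + 1"
proof (cases "R = {}")
  case False
  have "R \<subseteq> {Min R..Min R + c}" using assms Min_in[OF assms(1) False] Min_le[OF assms(1)] by auto
  then show ?thesis using card_mono[of "{Min R..Min R + c}" R] by simp
qed simp

lemma local_edits_nested:
  assumes "local_edit m h q1 x1 y A1 M1 M1' B1" "local_edit m h q2 x2 y A2 M2 M2' B2"
    and "length A1 + length M1' \<le> length A2"
  obtains Mid where "A2 = A1 @ M1' @ Mid" "B1 = Mid @ M2' @ B2" "ends_marker Mid"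
proof -
  have y: "y = A1 @ M1' @ B1" "y = A2 @ M2' @ B2" and b: "ends_marker A1" "ends_marker A2"
    "ends_marker M1'"
    using assms(1,2) by (simp_all add: local_edit_def)
  define Mid where "Mid = drop (length A1 + length M1') A2"
  have "take (length A1 + length M1') A2 = take (length A1 + length M1') y"
    using y(2) assms(3) by simp
  also have "\<dots> = A1 @ M1'" using y(1) by simp
  finally have A2: "A2 = A1 @ M1' @ Mid"
    unfolding Mid_def by (metis append_assoc append_take_drop_id)
  moreover have "ends_marker Mid"
    using ends_marker_appendD[of "A1 @ M1'" Mid] ends_marker_append[OF b(1,3)] A2 b(2) by simp
  moreover have "B1 = Mid @ M2' @ B2" using y A2 by simp
  ultimately show ?thesis using that by blast
qed

lemma weight_sum_append_ge:
  assumes "ends_marker P" "ends_marker M"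
  shows "m * length P + weight_sum m h (segs B) \<le> weight_sum m h (segs (P @ M @ B))"
  using weight_sum_eq[of m h "segs P"] sum_length_segs[OF assms(1)]
  by (simp add: segs_append assms)

lemma abs_le_of_mult_eq:
  fixes d g G1 G2 c K :: int
  assumes "d \<noteq> 0" "d * g = (G2 - G1) + c * K" "0 \<le> c"
  shows "\<bar>g\<bar> \<le> \<bar>G1\<bar> + \<bar>G2\<bar> + c * \<bar>K\<bar>"
proof -
  have "\<bar>g\<bar> \<le> \<bar>d\<bar> * \<bar>g\<bar>" using assms(1) by (simp add: mult_le_cancel_right1; linarith)
  also have "\<dots> = \<bar>(G2 - G1) + c * K\<bar>" using assms(2) by (simp flip: abs_mult)
  also have "\<dots> \<le> \<bar>G1\<bar> + \<bar>G2\<bar> + c * \<bar>K\<bar>"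
    using abs_triangle_ineq[of "G2 - G1" "c * K"] abs_triangle_ineq4[of G2 G1] assms(3)
    unfolding abs_mult by simp
  finally show ?thesis .
qed

section \<open>Two edits into the same string are close\<close>

text \<open>The hypotheses on the code used in the proof, with \<open>\<Delta>\<close>, \<open>m\<close> and the modulus of \<open>f\<close>
  as natural numbers \<open>D\<close>, \<open>m\<close> and \<open>modulus\<close>.\<close>

locale marker_code =
  fixes N D m modulus :: nat and h :: "bool list \<Rightarrow> nat" and C :: "bool list set" and s :: nat
  assumes hash_lt: "length z \<le> 3 * D \<Longrightarrow> h z < m"
    and hash_swap_ne:
      "length z \<le> 3 * D \<Longrightarrow> length z' \<le> 3 * D \<Longrightarrow> adj_trans_step z z' \<Longrightarrow> z' \<noteq> z \<Longrightarrow> h z \<noteq> h z'"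
    and modulus_gt: "7 * N * m + (18 * D + 18) * m < modulus"
    and length_code: "x \<in> C \<Longrightarrow> length x = N"
    and marker_at_end: "x \<in> C \<Longrightarrow> marker_at x N"
    and length_segs_le: "x \<in> C \<Longrightarrow> z \<in> set (segs x) \<Longrightarrow> length z \<le> D"
    and index_weight_mod: "x \<in> C \<Longrightarrow> index_weight m h (segs x) mod modulus = s"
    and hash_mset_far: "x \<in> C \<Longrightarrow> x' \<in> C \<Longrightarrow> hash_mset h x \<noteq> hash_mset h x' \<Longrightarrow>
      10 \<le> mset_symdiff_size (hash_mset h x) (hash_mset h x')"
begin

lemma m_pos: "0 < m"
  using hash_lt[of "[]"] by simp

lemma ends_marker_code: "x \<in> C \<Longrightarrow> ends_marker x"
  using marker_at_end length_code by (simp add: ends_marker_def)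

lemma hash_segs_lt:
  assumes "ends_marker P" "length P \<le> 3 * D"
  shows "\<forall>z\<in>set (segs P). h z < m"
proof
  fix z assume "z \<in> set (segs P)"
  then have "length z \<le> sum_list (map length (segs P))" by (simp add: member_le_sum_list)
  then show "h z < m" using hash_lt assms sum_length_segs[OF assms(1)] by simp
qed

lemma local_edit_block_lengths:
  assumes "local_edit m h q x y A M M' B" "x \<in> C"
  shows "length M \<le> 3 * D" "length M' \<le> 3 * D" "ell M = 1 \<Longrightarrow> length M \<le> D"
proof -
  have M: "ends_marker M" and ell: "ell M \<le> 3" and M': "length M' \<le> length M"
    using assms(1) by (auto simp: local_edit_def)
  have "\<forall>z\<in>set (segs M). length z \<le> D"
    using local_edit_segs(1)[OF assms(1) ends_marker_code[OF assms(2)]] length_segs_le[OF assms(2)]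
    by auto
  then have "length M \<le> D * ell M"
    using sum_list_mono[of "segs M" length "\<lambda>_. D"] sum_length_segs[OF M]
    by (simp add: sum_list_triv ell_eq_length_segs mult.commute)
  moreover have "D * ell M \<le> D * 3" using ell by (rule mult_le_mono2)
  ultimately show "length M \<le> 3 * D" by linarith
  show "ell M = 1 \<Longrightarrow> length M \<le> D" using \<open>length M \<le> D * ell M\<close> by simp
  show "length M' \<le> 3 * D" using M' \<open>length M \<le> 3 * D\<close> by simp
qed

lemma block_index_weight_le:
  assumes "ends_marker P" "length P \<le> 3 * D" "ell P \<le> 3"
  shows "index_weight m h (segs P) \<le> (9 * D + 9) * m"
proof -
  have "weight_sum m h (segs P) \<le> m * length P + m * ell P"
    using weight_sum_bounds(2)[OF assms(1) hash_segs_lt[OF assms(1,2)]] by simp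
  also have "\<dots> \<le> m * (3 * D) + m * 3"
    using assms(2,3) by (intro add_le_mono mult_le_mono2)
  finally have "weight_sum m h (segs P) \<le> m * (3 * D) + m * 3" .
  then have "ell P * weight_sum m h (segs P) \<le> 3 * (m * (3 * D) + m * 3)"
    using assms(3) by (intro mult_le_mono)
  then show ?thesis
    using index_weight_le[of m h "segs P"] by (simp add: ell_eq_length_segs algebra_simps)
qed

lemma local_edit_weight_change_abs_less:
  assumes "local_edit m h q x y A M M' B" "x \<in> C"
  shows "\<bar>weight_change m h M M'\<bar> < 3 * int m"
proof -
  have M: "ends_marker M" and M': "ends_marker M'"
    and shape: "(length M = length M' \<and> ell M \<le> 3 \<and> ell M' \<le> 3)
        \<or> (length M = length M' + 1 \<and> ell M \<le> 2 \<and> ell M' \<le> 2)"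
    using assms(1) by (auto simp: local_edit_def)
  note lengths = local_edit_block_lengths[OF assms]
  note SM = weight_sum_bounds[OF M hash_segs_lt[OF M lengths(1)]]
  note SM' = weight_sum_bounds[OF M' hash_segs_lt[OF M' lengths(2)]]
  have pos: "1 \<le> ell M" "1 \<le> ell M'" using local_edit_ell_pos[OF assms(1)] by simp_all
  from shape show ?thesis
  proof
    assume "length M = length M' \<and> ell M \<le> 3 \<and> ell M' \<le> 3"
    then have "m * ell M \<le> m * 3" "m * ell M' \<le> m * 3" "m * length M = m * length M'"
      using mult_le_mono2 by auto
    then show ?thesis using SM SM' pos unfolding weight_change_def by linarith
  next
    assume "length M = length M' + 1 \<and> ell M \<le> 2 \<and> ell M' \<le> 2"
    then have "m * ell M \<le> m * 2" "m * ell M' \<le> m * 2" "m * length M = m * length M' + m"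
      using mult_le_mono2 by auto
    then show ?thesis using SM SM' pos unfolding weight_change_def by linarith
  qed
qed

lemma local_edit_weight_bounds:
  assumes "local_edit m h q x y A M M' B" "x \<in> C"
  shows "index_weight m h (segs M) \<le> (9 * D + 9) * m"
    "index_weight m h (segs M') \<le> (9 * D + 9) * m"
    "weight_sum m h (segs B) \<le> 2 * N * m"
    "ell A \<le> N"
proof -
  have M: "ends_marker M" and M': "ends_marker M'" and ell: "ell M \<le> 3" "ell M' \<le> 3"
    and x: "x = A @ M @ B" and A: "ends_marker A"
    using assms(1) by (auto simp: local_edit_def)
  note lengths = local_edit_block_lengths[OF assms]
  show "index_weight m h (segs M) \<le> (9 * D + 9) * m"
    using block_index_weight_le[OF M lengths(1) ell(1)] .
  show "index_weight m h (segs M') \<le> (9 * D + 9) * m"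
    using block_index_weight_le[OF M' lengths(2) ell(2)] .
  have x': "ends_marker x" using ends_marker_code[OF assms(2)] .
  have B: "ends_marker B" using local_edit_segs(3)[OF assms(1) x'] .
  have lB: "length B \<le> N" "ell A \<le> length A" "length A \<le> N"
    using x length_code[OF assms(2)] ell_le_length[OF A] by auto
  have "\<forall>z\<in>set (segs B). h z < m"
    using length_segs_le[OF assms(2)] hash_lt local_edit_segs(1)[OF assms(1) x'] by fastforce
  then have "weight_sum m h (segs B) \<le> m * length B + m * ell B"
    using weight_sum_bounds(2)[OF B] by fastforce
  also have "\<dots> \<le> m * N + m * N"
    using lB ell_le_length[OF B] by (intro add_le_mono mult_le_mono2) auto
  finally show "weight_sum m h (segs B) \<le> 2 * N * m" by (simp add: algebra_simps)
  show "ell A \<le> N" using lB by simp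
qed

lemma local_edits_hash_mset_eq:
  assumes e1: "local_edit m h q1 x1 y A1 M1 M1' B1" and e2: "local_edit m h q2 x2 y A2 M2 M2' B2"
    and x1: "x1 \<in> C" and x2: "x2 \<in> C"
  shows "hash_mset h x1 = hash_mset h x2"
proof (rule ccontr)
  assume ne: "hash_mset h x1 \<noteq> hash_mset h x2"
  have eq: "hash_mset h x1 + (hash_mset h M1' + hash_mset h M2)
      = hash_mset h x2 + (hash_mset h M2' + hash_mset h M1)"
    using local_edit_hash_mset[OF e1 ends_marker_code[OF x1]]
      local_edit_hash_mset[OF e2 ends_marker_code[OF x2]]
    by (metis add.assoc add.commute)
  have "size (hash_mset h x1 - hash_mset h x2) \<le> ell M2' + ell M1"
    using size_diff_le_of_add_eq[OF eq] by (simp add: size_hash_mset)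
  moreover have "size (hash_mset h x2 - hash_mset h x1) \<le> ell M1' + ell M2"
    using size_diff_le_of_add_eq[OF eq[symmetric]] by (simp add: size_hash_mset)
  moreover have "ell M1 + ell M1' \<le> 4" "ell M2 + ell M2' \<le> 4"
    using e1 e2 by (simp_all add: local_edit_def)
  ultimately have "mset_symdiff_size (hash_mset h x1) (hash_mset h x2) < 10"
    unfolding mset_symdiff_size_def by linarith
  then show False using hash_mset_far[OF x1 x2 ne] by simp
qed

lemma local_edits_changes_eq:
  assumes e1: "local_edit m h q1 x1 y A1 M1 M1' B1" and e2: "local_edit m h q2 x2 y A2 M2 M2' B2"
    and x1: "x1 \<in> C" and x2: "x2 \<in> C"
  shows "ell_change M1 M1' = ell_change M2 M2'"
    "weight_change m h M1 M1' = weight_change m h M2 M2'"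
proof -
  have b1: "ends_marker x1" and b2: "ends_marker x2" using ends_marker_code x1 x2 by simp_all
  have H: "hash_mset h x1 = hash_mset h x2" by (rule local_edits_hash_mset_eq[OF e1 e2 x1 x2])
  then have "ell x1 = ell x2" by (metis size_hash_mset)
  then show "ell_change M1 M1' = ell_change M2 M2'"
    using local_edit_changes(1)[OF e1 b1] local_edit_changes(1)[OF e2 b2] by simp
  have "weight_sum m h (segs x1) = weight_sum m h (segs x2)"
    using H weight_sum_segs[OF b1] weight_sum_segs[OF b2] length_code[OF x1] length_code[OF x2]
    by simp
  then show "weight_change m h M1 M1' = weight_change m h M2 M2'"
    using local_edit_changes(2)[OF e1 b1] local_edit_changes(2)[OF e2 b2] by simp
qed

text \<open>The two index weights differ by bounded local terms, less than the modulus.\<close>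

lemma local_edits_index_weight_eq:
  assumes e1: "local_edit m h q1 x1 y A1 M1 M1' B1" and e2: "local_edit m h q2 x2 y A2 M2 M2' B2"
    and x1: "x1 \<in> C" and x2: "x2 \<in> C"
  shows "index_weight m h (segs x1) = index_weight m h (segs x2)"
proof -
  define G1 G2 K d b1 b2 where "G1 = index_change m h M1 M1'" and "G2 = index_change m h M2 M2'"
    and "K = weight_change m h M1 M1'" and "d = ell_change M1 M1'"
    and "b1 = int (weight_sum m h (segs B1))" and "b2 = int (weight_sum m h (segs B2))"
  note bd1 = local_edit_weight_bounds[OF e1 x1] and bd2 = local_edit_weight_bounds[OF e2 x2]
  have "\<bar>G1\<bar> \<le> int ((9 * D + 9) * m)" "\<bar>G2\<bar> \<le> int ((9 * D + 9) * m)"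
    using bd1(1,2) bd2(1,2) unfolding G1_def G2_def index_change_def by linarith+
  moreover have "\<bar>(int (ell A1) - int (ell A2)) * K\<bar> \<le> int N * (3 * int m)"
    unfolding abs_mult K_def using local_edit_weight_change_abs_less[OF e1 x1] bd1(4) bd2(4)
    by (intro mult_mono) auto
  moreover have "\<bar>d * (b1 - b2)\<bar> \<le> 2 * int (2 * N * m)"
  proof -
    have "0 \<le> b1" "b1 \<le> int (2 * N * m)" "0 \<le> b2" "b2 \<le> int (2 * N * m)"
      unfolding b1_def b2_def of_nat_le_iff using bd1(3) bd2(3) by simp_all
    moreover have "\<bar>d\<bar> \<le> 2" unfolding d_def by (rule local_edit_ell_change_abs_le[OF e1])
    ultimately show ?thesis unfolding abs_mult by (intro mult_mono) linarith+
  qed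
  moreover have "int (index_weight m h (segs x1)) - int (index_weight m h (segs x2))
      = (G1 - G2) + (int (ell A1) - int (ell A2)) * K + d * (b1 - b2)"
    using local_edit_index_weight[OF e1 ends_marker_code[OF x1]]
      local_edit_index_weight[OF e2 ends_marker_code[OF x2]] local_edits_changes_eq[OF e1 e2 x1 x2]
    unfolding G1_def G2_def K_def d_def b1_def b2_def by (simp add: algebra_simps)
  moreover have "int (7 * N * m + (18 * D + 18) * m) < int modulus"
    using modulus_gt by linarith
  ultimately have
    "\<bar>int (index_weight m h (segs x1)) - int (index_weight m h (segs x2))\<bar> < int modulus"
    by (simp add: algebra_simps)
  then show ?thesis using mod_eq_imp_eq index_weight_mod[OF x1] index_weight_mod[OF x2] by metis
qed

lemma local_edits_balance:
  assumes e1: "local_edit m h q1 x1 y A1 M1 M1' B1" and e2: "local_edit m h q2 x2 y A2 M2 M2' B2"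
    and x1: "x1 \<in> C" and x2: "x2 \<in> C"
  shows "index_change m h M1 M1' + int (ell A1) * weight_change m h M1 M1'
       + ell_change M1 M1' * int (weight_sum m h (segs B1))
     = index_change m h M2 M2' + int (ell A2) * weight_change m h M1 M1'
       + ell_change M1 M1' * int (weight_sum m h (segs B2))"
  using local_edit_index_weight[OF e1 ends_marker_code[OF x1]]
    local_edit_index_weight[OF e2 ends_marker_code[OF x2]]
    local_edits_index_weight_eq[OF e1 e2 x1 x2] local_edits_changes_eq[OF e1 e2 x1 x2]
  by simp

lemma local_edits_close_same_ell:
  assumes e1: "local_edit m h q1 x1 y A1 M1 M1' B1" and e2: "local_edit m h q2 x2 y A2 M2 M2' B2"
    and x1: "x1 \<in> C" and x2: "x2 \<in> C" and d: "ell_change M1 M1' = 0"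
  shows "q2 \<le> q1 + D"
proof -
  note eq = local_edits_changes_eq[OF e1 e2 x1 x2]
  note s1 = local_edit_single_segment[OF e1 d]
  note s2 = local_edit_single_segment[OF e2 d[unfolded eq(1)]]
  have "(1 + int (ell A1)) * weight_change m h M1 M1'
      = (1 + int (ell A2)) * weight_change m h M1 M1'"
    using local_edits_balance[OF e1 e2 x1 x2] s1(3) s2(3) eq(2) d by (simp add: algebra_simps)
  then have "ell A1 = ell A2" using s1(4) by simp
  moreover have "y = A1 @ M1' @ B1" "y = A2 @ M2' @ B2" "ends_marker A1" "ends_marker A2"
    using e1 e2 by (simp_all add: local_edit_def)
  ultimately have "length A1 = length A2"
    using ell_prefix_less[of y A1 "M1' @ B1" A2 "M2' @ B2"]
      ell_prefix_less[of y A2 "M2' @ B2" A1 "M1' @ B1"] by fastforce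
  moreover have "length M2 \<le> D"
    using local_edit_block_lengths(3)[OF e2 x2] s2(1) by (simp add: ell_eq_length_segs)
  ultimately show ?thesis using e1 e2 by (simp add: local_edit_def)
qed

text \<open>If the number of segments changes, the balance equation charges the weight of everything
  between the two edit sites to bounded local terms.\<close>

lemma local_edits_gap_le:
  assumes e1: "local_edit m h q1 x1 y A1 M1 M1' B1" and e2: "local_edit m h q2 x2 y A2 M2 M2' B2"
    and x1: "x1 \<in> C" and x2: "x2 \<in> C" and d: "ell_change M1 M1' \<noteq> 0"
    and A2: "A2 = A1 @ M1' @ Mid" and B1: "B1 = Mid @ M2' @ B2" and Mid: "ends_marker Mid"
  shows "length Mid \<le> 72 * D + 108"
proof -
  define K G1 G2 c where "K = weight_change m h M1 M1'" and "G1 = index_change m h M1 M1'"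
    and "G2 = index_change m h M2 M2'" and "c = int (ell M1') + int (ell Mid)"
  define gap where "gap = int (weight_sum m h (segs B1)) - int (weight_sum m h (segs B2))"
  have b: "ends_marker A1" "ends_marker M1'" "ends_marker M2'"
    using e1 e2 by (simp_all add: local_edit_def)
  note bd1 = local_edit_weight_bounds[OF e1 x1] and bd2 = local_edit_weight_bounds[OF e2 x2]
  have "m * length Mid + weight_sum m h (segs B2) \<le> weight_sum m h (segs B1)"
    unfolding B1 by (rule weight_sum_append_ge[OF Mid b(3)])
  then have gap_ge: "int (length Mid) * int m \<le> gap"
    unfolding gap_def by (simp add: mult.commute flip: of_nat_add of_nat_mult)
  have "ell A2 = ell A1 + ell M1' + ell Mid"
    using A2 ell_append[OF b(1)] ell_append[OF b(2)] by simp
  then have "ell_change M1 M1' * gap = (G2 - G1) + c * K"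
    using local_edits_balance[OF e1 e2 x1 x2]
    unfolding K_def G1_def G2_def c_def gap_def by (simp add: algebra_simps)
  then have gap_le: "\<bar>gap\<bar> \<le> \<bar>G1\<bar> + \<bar>G2\<bar> + c * \<bar>K\<bar>"
    using abs_le_of_mult_eq d unfolding c_def by simp
  have "\<bar>G1\<bar> \<le> int ((9 * D + 9) * m)" "\<bar>G2\<bar> \<le> int ((9 * D + 9) * m)"
    using bd1(1,2) bd2(1,2) unfolding G1_def G2_def index_change_def by linarith+
  moreover have "int ((9 * D + 9) * m) = 9 * (int D * int m) + 9 * int m"
    by (simp add: algebra_simps)
  moreover have "c * \<bar>K\<bar> \<le> (3 + int (ell Mid)) * (3 * int m)"
    using e1 local_edit_weight_change_abs_less[OF e1 x1] unfolding K_def c_def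
    by (intro mult_mono) (auto simp: local_edit_def)
  then have "c * \<bar>K\<bar> \<le> 9 * int m + 3 * (int (ell Mid) * int m)"
    by (simp add: algebra_simps)
  moreover have "int (4 * ell Mid * m) \<le> int (length Mid * m)"
    using ell_le_length[OF Mid] by (intro of_nat_mono mult_right_mono) simp_all
  then have "4 * (int (ell Mid) * int m) \<le> int (length Mid) * int m"
    by (simp add: algebra_simps)
  ultimately have "int (length Mid) * int m \<le> 72 * (int D * int m) + 108 * int m"
    using gap_ge gap_le by linarith
  then have "int m * int (length Mid) \<le> int m * (72 * int D + 108)"
    by (simp add: algebra_simps)
  then show ?thesis using m_pos by (simp add: mult_le_cancel_left)
qed

lemma local_edits_close_ell_change:
  assumes e1: "local_edit m h q1 x1 y A1 M1 M1' B1" and e2: "local_edit m h q2 x2 y A2 M2 M2' B2"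
    and x1: "x1 \<in> C" and x2: "x2 \<in> C" and d: "ell_change M1 M1' \<noteq> 0"
  shows "q2 \<le> q1 + 78 * D + 108"
proof -
  have q: "length A1 < q1" "q2 \<le> length A2 + length M2"
    using e1 e2 by (simp_all add: local_edit_def)
  note len1 = local_edit_block_lengths[OF e1 x1] and len2 = local_edit_block_lengths[OF e2 x2]
  show ?thesis
  proof (cases "length A1 + length M1' \<le> length A2")
    case True
    then obtain Mid where "A2 = A1 @ M1' @ Mid" "B1 = Mid @ M2' @ B2" "ends_marker Mid"
      using local_edits_nested[OF e1 e2] by blast
    then show ?thesis using local_edits_gap_le[OF e1 e2 x1 x2 d] q len1 len2 by fastforce
  qed (use q len1 len2 in linarith)
qed

lemma local_edits_close:
  assumes "local_edit m h q1 x1 y A1 M1 M1' B1" "local_edit m h q2 x2 y A2 M2 M2' B2"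
    "x1 \<in> C" "x2 \<in> C"
  shows "q2 \<le> q1 + 78 * D + 108"
  using local_edits_close_same_ell[OF assms] local_edits_close_ell_change[OF assms]
  by (cases "ell_change M1 M1' = 0") auto

lemma card_edit_positions_le:
  assumes T: "T \<subseteq> {1..N}"
    and edit: "\<And>j. j \<in> T \<Longrightarrow> j + 5 \<le> N \<Longrightarrow> \<exists>x\<in>C. \<exists>A M M' B. local_edit m h j x y A M M' B"
  shows "card T \<le> 78 * D + 115"
proof -
  define R where "R = {j \<in> T. j + 5 \<le> N}"
  have fin: "finite R" using T finite_subset unfolding R_def by fastforce
  have "\<forall>a\<in>R. \<forall>b\<in>R. b \<le> a + (78 * D + 108)"
  proof (intro ballI)
    fix a b assume "a \<in> R" "b \<in> R"
    then have "a \<in> T" "a + 5 \<le> N" "b \<in> T" "b + 5 \<le> N" unfolding R_def by simp_all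
    then obtain x1 A1 M1 M1' B1 x2 A2 M2 M2' B2 where "x1 \<in> C" "x2 \<in> C"
      "local_edit m h a x1 y A1 M1 M1' B1" "local_edit m h b x2 y A2 M2 M2' B2"
      using edit by meson
    from local_edits_close[OF this(3,4,1,2)] show "b \<le> a + (78 * D + 108)" by simp
  qed
  then have "card R \<le> 78 * D + 109" using card_le_of_diameter[OF fin] by fastforce
  moreover have "T \<subseteq> {N - 5..N} \<union> R" using T unfolding R_def by auto
  then have "card T \<le> card {N - 5..N} + card R"
    using fin card_mono[of "{N - 5..N} \<union> R" T] card_Un_le[of "{N - 5..N}" R] by simp
  ultimately show ?thesis by simp
qed

end

section \<open>Swaps and deletions are local edits\<close>

text \<open>Bits are read 1-based, padded by a \<open>1\<close> at position \<open>0\<close> and \<open>0\<close>s beyond the end. The padding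
  creates no marker, and it lets run boundaries at both ends of \<open>x\<close> be expressed uniformly.\<close>

definition padded_bit :: "bool list \<Rightarrow> nat \<Rightarrow> bool" where
  "padded_bit x j = (if j = 0 then True else if j \<le> length x then x ! (j - 1) else False)"

definition marker_pattern :: "(nat \<Rightarrow> bool) \<Rightarrow> nat \<Rightarrow> bool" where
  "marker_pattern c i \<longleftrightarrow> \<not> c (i - 3) \<and> \<not> c (i - 2) \<and> c (i - 1) \<and> c i"

lemma marker_at_iff_pattern: "marker_at x i \<longleftrightarrow> i \<le> length x \<and> marker_pattern (padded_bit x) i"
proof (cases "4 \<le> i")
  case True
  then have "i - 3 = (i - 4) + 1" "i - 2 = (i - 3) + 1" "i - 1 = (i - 2) + 1" by auto
  then show ?thesis using True unfolding marker_at_def marker_pattern_def padded_bit_def by auto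
next
  case False
  then have "i - 3 = 0" by auto
  then show ?thesis using False unfolding marker_at_def marker_pattern_def padded_bit_def by auto
qed

lemma padded_bit_swap_at:
  assumes "1 \<le> p" "p < length x"
  shows "padded_bit (swap_at x p)
    = (padded_bit x)(p := padded_bit x (p + 1), p + 1 := padded_bit x p)"
proof
  fix j
  show "padded_bit (swap_at x p) j
      = ((padded_bit x)(p := padded_bit x (p + 1), p + 1 := padded_bit x p)) j"
    using assms unfolding padded_bit_def swap_at_def
    by (cases "j = p"; cases "j = p + 1"; auto simp: nth_list_update)
qed

lemma padded_bit_del_at:
  assumes "1 \<le> p" "p \<le> length x"
  shows "padded_bit (del_at x p) = (\<lambda>j. padded_bit x (if j < p then j else j + 1))"
proof
  fix j
  have "length (del_at x p) = length x - 1" unfolding del_at_def using assms by simp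
  then show "padded_bit (del_at x p) j = padded_bit x (if j < p then j else j + 1)"
    using assms unfolding padded_bit_def del_at_def by (auto simp: nth_append)
qed

lemma marker_at_swap_at:
  assumes "1 \<le> p" "p < length x" "j < p \<or> p + 5 \<le> j"
  shows "marker_at (swap_at x p) j = marker_at x j"
proof -
  have "j - 3 \<notin> {p, p + 1} \<and> j - 2 \<notin> {p, p + 1} \<and> j - 1 \<notin> {p, p + 1} \<and> j \<notin> {p, p + 1}"
    using assms(1,3) by auto
  then have "marker_pattern (padded_bit (swap_at x p)) j = marker_pattern (padded_bit x) j"
    unfolding padded_bit_swap_at[OF assms(1,2)] marker_pattern_def by simp
  then show ?thesis by (simp add: marker_at_iff_pattern swap_at_def)
qed

lemma marker_at_del_at:
  assumes "1 \<le> p" "p \<le> length x"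
  shows "j < p \<Longrightarrow> marker_at (del_at x p) j = marker_at x j"
    "p + 3 \<le> j \<Longrightarrow> marker_at (del_at x p) j = marker_at x (j + 1)"
proof -
  have len: "length (del_at x p) = length x - 1" using assms by (simp add: del_at_def)
  note bits = padded_bit_del_at[OF assms]
  show "marker_at (del_at x p) j = marker_at x j" if "j < p"
  proof -
    have "j - 3 < p" "j - 2 < p" "j - 1 < p" using that by auto
    then have "marker_pattern (padded_bit (del_at x p)) j = marker_pattern (padded_bit x) j"
      using that unfolding bits marker_pattern_def by simp
    then show ?thesis using len that assms by (auto simp: marker_at_iff_pattern)
  qed
  show "marker_at (del_at x p) j = marker_at x (j + 1)" if "p + 3 \<le> j"
  proof -
    have "j - 3 + 1 = j + 1 - 3" "j - 2 + 1 = j + 1 - 2" "j - 1 + 1 = j + 1 - 1"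
      "\<not> j - 3 < p" "\<not> j - 2 < p" "\<not> j - 1 < p" "\<not> j < p"
      using that by auto
    then have "marker_pattern (padded_bit (del_at x p)) j = marker_pattern (padded_bit x) (j + 1)"
      unfolding bits marker_pattern_def by (simp only: if_False)
    then show ?thesis using len that assms by (auto simp: marker_at_iff_pattern)
  qed
qed

lemma sum_atMost_2_3_4:
  fixes f :: "nat \<Rightarrow> 'a::comm_monoid_add"
  shows "(\<Sum>i\<le>2. f i) = f 0 + f 1 + f 2"
    "(\<Sum>i\<le>3. f i) = f 0 + f 1 + f 2 + f 3"
    "(\<Sum>i\<le>4. f i) = f 0 + f 1 + f 2 + f 3 + f 4"
  by (simp_all add: numeral_eq_Suc atMost_Suc add_ac)

lemma marker_pattern_shift:
  fixes p :: nat
  shows "marker_pattern c (p + 0) \<longleftrightarrow> \<not> c (p - 3) \<and> \<not> c (p - 2) \<and> c (p - 1) \<and> c p"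
    "marker_pattern c (p + 1) \<longleftrightarrow> \<not> c (p - 2) \<and> \<not> c (p - 1) \<and> c p \<and> c (p + 1)"
    "marker_pattern c (p + 2) \<longleftrightarrow> \<not> c (p - 1) \<and> \<not> c p \<and> c (p + 1) \<and> c (p + 2)"
    "marker_pattern c (p + 3) \<longleftrightarrow> \<not> c p \<and> \<not> c (p + 1) \<and> c (p + 2) \<and> c (p + 3)"
    "marker_pattern c (p + 4) \<longleftrightarrow> \<not> c (p + 1) \<and> \<not> c (p + 2) \<and> c (p + 3) \<and> c (p + 4)"
  unfolding marker_pattern_def by (simp_all add: numeral_eq_Suc)

lemma swap_marker_table:
  fixes v0 v1 v2 v3 v4 v5 v6 v7 :: bool
  assumes "v3 \<noteq> v4"
  defines "k \<equiv> of_bool (\<not> v0 \<and> \<not> v1 \<and> v2 \<and> v3) + of_bool (\<not> v1 \<and> \<not> v2 \<and> v3 \<and> v4)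
      + of_bool (\<not> v2 \<and> \<not> v3 \<and> v4 \<and> v5) + of_bool (\<not> v3 \<and> \<not> v4 \<and> v5 \<and> v6)
      + of_bool (\<not> v4 \<and> \<not> v5 \<and> v6 \<and> v7) :: nat"
    and "k' \<equiv> of_bool (\<not> v0 \<and> \<not> v1 \<and> v2 \<and> v4) + of_bool (\<not> v1 \<and> \<not> v2 \<and> v4 \<and> v3)
      + of_bool (\<not> v2 \<and> \<not> v4 \<and> v3 \<and> v5) + of_bool (\<not> v4 \<and> \<not> v3 \<and> v5 \<and> v6)
      + of_bool (\<not> v3 \<and> \<not> v5 \<and> v6 \<and> v7) :: nat"
  shows "k + k' \<le> 2 \<and> (k = k' \<longrightarrow> k = 0)"
  using assms(1) unfolding k_def k'_def
  by (cases v0; cases v1; cases v2; cases v3; cases v5; cases v6; cases v7) simp_all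

lemma del_marker_table:
  fixes v0 v1 v2 v3 v4 v5 v6 :: bool
  assumes "(\<not> v3 \<and> v2) \<or> (v3 \<and> \<not> v4)"
  defines "k \<equiv> of_bool (\<not> v0 \<and> \<not> v1 \<and> v2 \<and> v3) + of_bool (\<not> v1 \<and> \<not> v2 \<and> v3 \<and> v4)
      + of_bool (\<not> v2 \<and> \<not> v3 \<and> v4 \<and> v5) + of_bool (\<not> v3 \<and> \<not> v4 \<and> v5 \<and> v6) :: nat"
    and "k' \<equiv> of_bool (\<not> v0 \<and> \<not> v1 \<and> v2 \<and> v4) + of_bool (\<not> v1 \<and> \<not> v2 \<and> v4 \<and> v5)
      + of_bool (\<not> v2 \<and> \<not> v4 \<and> v5 \<and> v6) :: nat"
  shows "k \<le> 1 \<and> k' \<le> 1 \<and> (k = k' \<longrightarrow> k = 0)"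
  using assms(1) unfolding k_def k'_def
  by (cases v0; cases v1; cases v2; cases v3; cases v4; cases v5; cases v6) simp_all

text \<open>A transposition of two different bits creates or destroys at most two markers, and if the
  number of markers is unchanged, then no marker ends near the transposition, before or after.\<close>

lemma swap_pattern_counts:
  fixes c :: "nat \<Rightarrow> bool"
  assumes "1 \<le> p" "c p \<noteq> c (p + 1)"
  defines "c' \<equiv> c(p := c (p + 1), p + 1 := c p)"
  defines "k \<equiv> (\<Sum>i\<le>4. of_bool (marker_pattern c (p + i)) :: nat)"
    and "k' \<equiv> (\<Sum>i\<le>4. of_bool (marker_pattern c' (p + i)) :: nat)"
  shows "k + k' \<le> 2 \<and> (k = k' \<longrightarrow> k = 0)"
proof -
  have "c' (p - 3) = c (p - 3)" "c' (p - 2) = c (p - 2)" "c' (p - 1) = c (p - 1)"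
    "c' p = c (p + 1)" "c' (p + 1) = c p" "c' (p + 2) = c (p + 2)" "c' (p + 3) = c (p + 3)"
    "c' (p + 4) = c (p + 4)"
    using assms(1) unfolding c'_def by auto
  then show ?thesis
    unfolding k_def k'_def sum_atMost_2_3_4 marker_pattern_shift
    by (simp only:) (rule swap_marker_table[OF assms(2)])
qed

text \<open>Likewise for deleting a bit that starts a run of \<open>0\<close>s or ends a run of \<open>1\<close>s.\<close>

lemma del_pattern_counts:
  fixes c :: "nat \<Rightarrow> bool"
  assumes "1 \<le> p" "(\<not> c p \<and> c (p - 1)) \<or> (c p \<and> \<not> c (p + 1))"
  defines "c' \<equiv> (\<lambda>j. c (if j < p then j else j + 1))"
  defines "k \<equiv> (\<Sum>i\<le>3. of_bool (marker_pattern c (p + i)) :: nat)"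
    and "k' \<equiv> (\<Sum>i\<le>2. of_bool (marker_pattern c' (p + i)) :: nat)"
  shows "k \<le> 1 \<and> k' \<le> 1 \<and> (k = k' \<longrightarrow> k = 0)"
proof -
  have "c' (p - 3) = c (p - 3)" "c' (p - 2) = c (p - 2)" "c' (p - 1) = c (p - 1)"
    "c' p = c (p + 1)" "c' (p + 1) = c (p + 2)" "c' (p + 2) = c (p + 3)"
    using assms(1) unfolding c'_def by (auto simp: numeral_eq_Suc)
  then show ?thesis
    unfolding k_def k'_def sum_atMost_2_3_4 marker_pattern_shift
    by (simp only:) (rule del_marker_table[OF assms(2)])
qed
lemma markers_around:
  assumes "marker_at x N" "0 < p" "p + c \<le> N"
  obtains e1 e2 where "e1 < p" "e1 = 0 \<or> marker_at x e1" "\<And>j. marker_at x j \<Longrightarrow> j < p \<Longrightarrow> j \<le> e1"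
    "p + c \<le> e2" "marker_at x e2" "\<And>j. marker_at x j \<Longrightarrow> p + c \<le> j \<Longrightarrow> e2 \<le> j"
proof -
  define e1 where "e1 = Max (insert 0 {j. marker_at x j \<and> j < p})"
  define e2 where "e2 = (LEAST j. marker_at x j \<and> p + c \<le> j)"
  have fin: "finite (insert 0 {j. marker_at x j \<and> j < p})" by simp
  then have "e1 \<in> insert 0 {j. marker_at x j \<and> j < p}" unfolding e1_def by (intro Max_in) auto
  then have "e1 = 0 \<or> marker_at x e1" "e1 < p" using assms(2) by auto
  moreover have "marker_at x e2 \<and> p + c \<le> e2"
    unfolding e2_def by (rule LeastI[of _ N]) (use assms in simp)
  ultimately show ?thesis
    using that[of e1 e2] Max_ge[OF fin] Least_le[of "\<lambda>j. marker_at x j \<and> p + c \<le> j"]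
    unfolding e1_def e2_def by auto
qed

lemma ends_marker_take: "e = 0 \<or> marker_at x e \<Longrightarrow> ends_marker (take e x)"
  unfolding ends_marker_def using marker_at_take[of e x e] marker_at_le_length[of x e]
  by (auto simp: min_def)

lemma ends_marker_between:
  "marker_at x e2 \<Longrightarrow> e1 + 4 \<le> e2 \<Longrightarrow> ends_marker (drop e1 (take e2 x)) \<and> drop e1 (take e2 x) \<noteq> []"
  unfolding ends_marker_def
  using marker_at_drop[of e1 "take e2 x" "e2 - e1"] marker_at_take[of e2 x]
    marker_at_le_length[of x e2]
  by auto

lemma window_decomposition:
  assumes "e1 + 4 \<le> e2" "e1 + 4 \<le> e2'" "e1 = 0 \<or> marker_at x e1" "marker_at x e2" "marker_at y e2'"
    and "take e1 y = take e1 x" "drop e2' y = drop e2 x"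
  defines "A \<equiv> take e1 x" and "M \<equiv> drop e1 (take e2 x)" and "M' \<equiv> drop e1 (take e2' y)"
    and "B \<equiv> drop e2 x"
  shows "x = A @ M @ B \<and> y = A @ M' @ B \<and> ends_marker A \<and> ends_marker M \<and> ends_marker M'
    \<and> M \<noteq> [] \<and> M' \<noteq> [] \<and> length A = e1 \<and> length M = e2 - e1 \<and> length M' = e2' - e1"
proof -
  have split: "z = take e1 z @ drop e1 (take e z) @ drop e z" if "e1 \<le> e" for z :: "bool list" and e
    using that by (metis append.assoc append_take_drop_id min.absorb1 take_take)
  have "e2 \<le> length x" "e2' \<le> length y" using assms(4,5) marker_at_le_length by auto
  then show ?thesis
    using split[of e2 x] split[of e2' y] assms ends_marker_take[OF assms(3)]
      ends_marker_between[OF assms(4,1)] ends_marker_between[OF assms(5,2)]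
    by auto
qed

lemma ell_between_markers:
  assumes "e1 < lo" "lo \<le> hi" "hi < e2" "e1 = 0 \<or> marker_at z e1" "marker_at z e2"
    and below: "\<And>j. marker_at z j \<Longrightarrow> j < lo \<Longrightarrow> j \<le> e1"
    and above: "\<And>j. marker_at z j \<Longrightarrow> hi < j \<Longrightarrow> e2 \<le> j"
  shows "ell (drop e1 (take e2 z)) = card {j. lo \<le> j \<and> j \<le> hi \<and> marker_at z j} + 1"
proof -
  define W where "W = {j. lo \<le> j \<and> j \<le> hi \<and> marker_at z j}"
  have far: "e1 + 4 \<le> j" if "marker_at z j" "lo \<le> j" for j
    using assms(1,4) marker_at_gap[of z e1 j] marker_at_ge_4[OF that(1)] that by fastforce
  have "(\<lambda>i. i + e1) ` {i. marker_at (drop e1 (take e2 z)) i}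
      = {j. marker_at z j \<and> e1 + 4 \<le> j \<and> j \<le> e2}"
  proof (intro set_eqI iffI)
    fix j assume "j \<in> {j. marker_at z j \<and> e1 + 4 \<le> j \<and> j \<le> e2}"
    then have "marker_at (drop e1 (take e2 z)) (j - e1)" "j = (j - e1) + e1"
      by (auto simp: marker_at_drop marker_at_take)
    then show "j \<in> (\<lambda>i. i + e1) ` {i. marker_at (drop e1 (take e2 z)) i}" by blast
  qed (auto simp: marker_at_drop marker_at_take add.commute)
  also have "\<dots> = insert e2 W"
    using below above far assms(1-3,5) unfolding W_def by (force simp: not_less)
  finally have "card {i. marker_at (drop e1 (take e2 z)) i} = card (insert e2 W)"
    by (metis card_image inj_on_add')
  moreover have "e2 \<notin> W" "finite W" using assms(3) unfolding W_def by auto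
  ultimately show ?thesis unfolding ell_def marker_ends_eq W_def by simp
qed

lemma card_markers_window:
  assumes "p + c \<le> length x"
  shows "card {j. p \<le> j \<and> j \<le> p + c \<and> marker_at x j}
    = (\<Sum>i\<le>c. of_bool (marker_pattern (padded_bit x) (p + i)))"
proof -
  have "{j. p \<le> j \<and> j \<le> p + c \<and> marker_at x j} = (\<lambda>i. p + i) ` {i. i \<le> c \<and> marker_at x (p + i)}"
    by (auto simp: image_iff le_iff_add)
  then have "card {j. p \<le> j \<and> j \<le> p + c \<and> marker_at x j} = card {i. i \<le> c \<and> marker_at x (p + i)}"
    by (simp add: card_image)
  also have "\<dots> = (\<Sum>i\<le>c. of_bool (marker_at x (p + i)))"
    by (simp add: sum_of_bool_eq Collect_conj_eq atMost_def Int_commute)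
  also have "\<dots> = (\<Sum>i\<le>c. of_bool (marker_pattern (padded_bit x) (p + i)))"
    using assms by (intro sum.cong) (auto simp: marker_at_iff_pattern)
  finally show ?thesis .
qed

lemma swap_at_self:
  assumes "x ! (k - 1) = x ! k"
  shows "swap_at x k = x"
proof -
  have "swap_at x k = x[k - 1 := x ! (k - 1), k := x ! k]" unfolding swap_at_def using assms by simp
  then show ?thesis by simp
qed

lemma swap_at_window:
  assumes "e1 < p" "p < e2" "e2 \<le> length x"
  shows "take e1 (swap_at x p) = take e1 x" "drop e2 (swap_at x p) = drop e2 x"
    "drop e1 (take e2 (swap_at x p)) = swap_at (drop e1 (take e2 x)) (p - e1)"
proof -
  show "take e1 (swap_at x p) = take e1 x" "drop e2 (swap_at x p) = drop e2 x"
    using assms unfolding swap_at_def by simp_all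
  have "p - 1 - e1 = p - e1 - 1" "e1 \<le> p - 1" using assms by auto
  then show "drop e1 (take e2 (swap_at x p)) = swap_at (drop e1 (take e2 x)) (p - e1)"
    using assms unfolding swap_at_def by (simp add: take_update_swap drop_update_swap)
qed

lemma del_at_window:
  assumes "e1 < p" "p < e2" "e2 \<le> length x"
  shows "take e1 (del_at x p) = take e1 x" "drop (e2 - 1) (del_at x p) = drop e2 x"
proof -
  have "e1 \<le> p - 1" "e1 \<le> length x" using assms by simp_all
  then show "take e1 (del_at x p) = take e1 x" by (simp add: del_at_def min_def)
  have "drop (e2 - 1) (del_at x p) = drop (e2 - 1 - (p - 1)) (drop p x)"
    using assms by (simp add: del_at_def)
  then show "drop (e2 - 1) (del_at x p) = drop e2 x" using assms by simp
qed

text \<open>Deleting any bit of a run gives the same string, so it suffices to consider the first bit of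
  a run of \<open>0\<close>s and the last bit of a run of \<open>1\<close>s.\<close>

definition canonical_del :: "bool list \<Rightarrow> nat \<Rightarrow> bool" where
  "canonical_del x q \<longleftrightarrow>
     (\<not> padded_bit x q \<and> padded_bit x (q - 1)) \<or> (padded_bit x q \<and> \<not> padded_bit x (q + 1))"

lemma del_at_run:
  assumes "1 \<le> q" "q < length x" "x ! (q - 1) = x ! q"
  shows "del_at x q = del_at x (q + 1)"
proof -
  have "take q x = take (q - 1) x @ [x ! (q - 1)]"
    using assms take_Suc_conv_app_nth[of "q - 1" x] by simp
  moreover have "drop q x = x ! q # drop (q + 1) x" using assms by (simp add: Cons_nth_drop_Suc)
  ultimately show ?thesis unfolding del_at_def using assms by simp
qed

lemma canonical_del_zero_run:
  "1 \<le> p \<Longrightarrow> p \<le> length x \<Longrightarrow> \<not> padded_bit x p \<Longrightarrow>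
    \<exists>q. 1 \<le> q \<and> q \<le> length x \<and> del_at x q = del_at x p \<and> canonical_del x q"
proof (induction p rule: less_induct)
  case (less p)
  show ?case
  proof (cases "padded_bit x (p - 1)")
    case True
    then show ?thesis using less.prems unfolding canonical_del_def by blast
  next
    case False
    then have "2 \<le> p" "x ! (p - 2) = x ! (p - 1)"
      using less.prems by (auto simp: padded_bit_def numeral_2_eq_2 split: if_splits)
    then have "del_at x (p - 1) = del_at x p"
      using del_at_run[of "p - 1" x] less.prems by (simp add: numeral_eq_Suc)
    then show ?thesis using less.IH[of "p - 1"] False less.prems \<open>2 \<le> p\<close> by fastforce
  qed
qed

lemma canonical_del_one_run:
  "1 \<le> p \<Longrightarrow> p \<le> length x \<Longrightarrow> padded_bit x p \<Longrightarrow>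
    \<exists>q. 1 \<le> q \<and> q \<le> length x \<and> del_at x q = del_at x p \<and> canonical_del x q"
proof (induction "length x - p" arbitrary: p rule: less_induct)
  case less
  show ?case
  proof (cases "padded_bit x (p + 1)")
    case False
    then show ?thesis using less.prems unfolding canonical_del_def by blast
  next
    case True
    then have "p < length x" "x ! (p - 1) = x ! p"
      using less.prems by (auto simp: padded_bit_def split: if_splits)
    then have "del_at x p = del_at x (p + 1)" using del_at_run[of p x] less.prems by simp
    then show ?thesis using less.hyps[of "p + 1"] True \<open>p < length x\<close> by fastforce
  qed
qed

lemma canonical_del_exists:
  "1 \<le> p \<Longrightarrow> p \<le> length x \<Longrightarrow>
    \<exists>q. 1 \<le> q \<and> q \<le> length x \<and> del_at x q = del_at x p \<and> canonical_del x q"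
  using canonical_del_zero_run canonical_del_one_run by blast

definition swap_positions :: "bool list set \<Rightarrow> nat \<Rightarrow> bool list \<Rightarrow> nat set" where
  "swap_positions C N y = {j. 1 \<le> j \<and> j < N \<and> (\<exists>x\<in>C. swap_at x j = y \<and> swap_at x j \<noteq> x)}"

definition del_positions :: "bool list set \<Rightarrow> nat \<Rightarrow> bool list \<Rightarrow> nat set" where
  "del_positions C N y = {q. 1 \<le> q \<and> q \<le> N \<and> (\<exists>x\<in>C. del_at x q = y \<and> canonical_del x q)}"

context marker_code
begin

lemma length_single_segment_block:
  assumes "x \<in> C" "x = A @ M @ B" "ends_marker A" "ends_marker M" "ell M = 1"
  shows "length M \<le> D"
proof -
  have "segs x = segs A @ segs M @ segs B" using assms(2-4) segs_append by simp
  then show ?thesis using length_segs_le[OF assms(1)] segs_single[OF assms(4,5)] by simp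
qed

lemma seg_weight_swap_at_ne:
  assumes "length M \<le> 3 * D" "1 \<le> k" "k < length M" "M ! (k - 1) \<noteq> M ! k"
  shows "seg_weight m h M \<noteq> seg_weight m h (swap_at M k)"
proof -
  have "swap_at M k ! (k - 1) = M ! k" using assms(2,3) by (simp add: swap_at_def nth_list_update)
  then have "swap_at M k \<noteq> M" using assms(4) by auto
  moreover have "adj_trans_step M (swap_at M k)"
    unfolding adj_trans_step_def using assms(2,3) by auto
  moreover have "length (swap_at M k) = length M" by (simp add: swap_at_def)
  ultimately show ?thesis
    using hash_swap_ne[of M "swap_at M k"] assms(1) by (simp add: seg_weight_def)
qed

lemma swap_local_edit:
  assumes x: "x \<in> C" and p: "1 \<le> p" "p + 5 \<le> N" and ne: "x ! (p - 1) \<noteq> x ! p"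
  shows "\<exists>A M M' B. local_edit m h p x (swap_at x p) A M M' B"
proof -
  define y c where "y = swap_at x p" and "c = padded_bit x"
  have lx: "length x = N" and ly: "length y = N"
    using length_code[OF x] by (simp_all add: y_def swap_at_def)
  obtain e1 e2 where e1: "e1 < p" "e1 = 0 \<or> marker_at x e1" "\<And>j. marker_at x j \<Longrightarrow> j < p \<Longrightarrow> j \<le> e1"
    and e2: "p + 5 \<le> e2" "marker_at x e2" "\<And>j. marker_at x j \<Longrightarrow> p + 5 \<le> j \<Longrightarrow> e2 \<le> j"
    using markers_around[OF marker_at_end[OF x], of p 5] p by auto
  have e2N: "e2 \<le> length x" using marker_at_le_length[OF e2(2)] .
  have bits: "padded_bit y = c(p := c (p + 1), p + 1 := c p)"
    unfolding y_def c_def using padded_bit_swap_at p lx by simp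
  have far: "marker_at y j = marker_at x j" if "j < p \<or> p + 5 \<le> j" for j
    unfolding y_def using marker_at_swap_at p lx that by simp
  have e12: "e1 + 4 \<le> e2" using e1(1) e2(1) by linarith
  define A M M' B where "A = take e1 x" and "M = drop e1 (take e2 x)" and "M' = drop e1 (take e2 y)"
    and "B = drop e2 x"
  have "marker_at y e2" "take e1 y = take e1 x" "drop e2 y = drop e2 x"
    using far[of e2] e2 swap_at_window(1,2)[OF e1(1) _ e2N] unfolding y_def by auto
  then have dec: "x = A @ M @ B \<and> y = A @ M' @ B \<and> ends_marker A \<and> ends_marker M \<and> ends_marker M'
    \<and> M \<noteq> [] \<and> M' \<noteq> [] \<and> length A = e1 \<and> length M = e2 - e1 \<and> length M' = e2 - e1"
    unfolding A_def M_def M'_def B_def by (rule window_decomposition[OF e12 e12 e1(2) e2(2)])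
  have "ell M = card {j. p \<le> j \<and> j \<le> p + 4 \<and> marker_at x j} + 1"
    unfolding M_def by (rule ell_between_markers) (use e1 e2 in auto)
  moreover have "ell M' = card {j. p \<le> j \<and> j \<le> p + 4 \<and> marker_at y j} + 1"
    unfolding M'_def by (rule ell_between_markers) (use e1 e2 far in auto)
  moreover have "c p \<noteq> c (p + 1)" using ne p lx by (simp add: c_def padded_bit_def)
  ultimately have counts: "ell M + ell M' \<le> 4 \<and> (ell M = ell M' \<longrightarrow> ell M = 1)"
    using swap_pattern_counts[OF p(1), of c] card_markers_window[of p 4 x]
      card_markers_window[of p 4 y] p lx ly unfolding bits c_def by auto
  have "seg_weight m h M \<noteq> seg_weight m h M'" if "ell M = ell M'"
  proof -
    have "length M \<le> D" using length_single_segment_block[OF x] dec counts that by blast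
    moreover have "M' = swap_at M (p - e1)"
      unfolding M_def M'_def y_def using swap_at_window e1(1) e2 e2N by simp
    moreover have "M ! (p - e1 - 1) \<noteq> M ! (p - e1)"
      using ne e1(1) e2 e2N unfolding M_def by (simp add: Suc_diff_Suc numeral_eq_Suc)
    ultimately show ?thesis using seg_weight_swap_at_ne[of M "p - e1"] dec e1(1) e2(1) by simp
  qed
  moreover have "1 \<le> ell M" "1 \<le> ell M'" using dec ell_pos by auto
  ultimately have "local_edit m h p x y A M M' B"
    unfolding local_edit_def using dec counts e1(1) e2(1) by auto
  then show ?thesis unfolding y_def by blast
qed

lemma del_local_edit:
  assumes x: "x \<in> C" and p: "1 \<le> p" "p + 4 \<le> N"
    and canonical: "canonical_del x p"
  shows "\<exists>A M M' B. local_edit m h p x (del_at x p) A M M' B"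
proof -
  define y c where "y = del_at x p" and "c = padded_bit x"
  have lx: "length x = N" and ly: "length y = N - 1"
    using length_code[OF x] p by (simp_all add: y_def del_at_def)
  obtain e1 e2 where e1: "e1 < p" "e1 = 0 \<or> marker_at x e1" "\<And>j. marker_at x j \<Longrightarrow> j < p \<Longrightarrow> j \<le> e1"
    and e2: "p + 4 \<le> e2" "marker_at x e2" "\<And>j. marker_at x j \<Longrightarrow> p + 4 \<le> j \<Longrightarrow> e2 \<le> j"
    using markers_around[OF marker_at_end[OF x], of p 4] p by auto
  have e2N: "e2 \<le> length x" using marker_at_le_length[OF e2(2)] .
  have bits: "padded_bit y = (\<lambda>j. c (if j < p then j else j + 1))"
    unfolding y_def c_def using padded_bit_del_at p lx by simp
  have before: "marker_at y j = marker_at x j" if "j < p" for j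
    unfolding y_def using marker_at_del_at p lx that by simp
  have after: "marker_at y j = marker_at x (j + 1)" if "p + 3 \<le> j" for j
    unfolding y_def using marker_at_del_at p lx that by simp
  have e12: "e1 + 4 \<le> e2" "e1 + 4 \<le> e2 - 1" using e1(1) e2(1) by linarith+
  define A M M' B where "A = take e1 x" and "M = drop e1 (take e2 x)"
    and "M' = drop e1 (take (e2 - 1) y)"
    and "B = drop e2 x"
  have "marker_at y (e2 - 1)" "take e1 y = take e1 x" "drop (e2 - 1) y = drop e2 x"
    using after[of "e2 - 1"] e2 del_at_window[OF e1(1) _ e2N] unfolding y_def by auto
  then have dec: "x = A @ M @ B \<and> y = A @ M' @ B \<and> ends_marker A \<and> ends_marker M \<and> ends_marker M'
    \<and> M \<noteq> [] \<and> M' \<noteq> [] \<and> length A = e1 \<and> length M = e2 - e1 \<and> length M' = e2 - 1 - e1"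
    unfolding A_def M_def M'_def B_def by (rule window_decomposition[OF e12 e1(2) e2(2)])
  have "ell M = card {j. p \<le> j \<and> j \<le> p + 3 \<and> marker_at x j} + 1"
    unfolding M_def by (rule ell_between_markers) (use e1 e2 in auto)
  moreover have "ell M' = card {j. p \<le> j \<and> j \<le> p + 2 \<and> marker_at y j} + 1"
    unfolding M'_def
  proof (rule ell_between_markers)
    fix j assume "marker_at y j" "p + 2 < j"
    then have "marker_at x (j + 1)" using after by simp
    then show "e2 - 1 \<le> j" using e2(3)[of "j + 1"] \<open>p + 2 < j\<close> by simp
  qed (use e1 e2 before after in auto)
  ultimately have counts: "ell M \<le> 2 \<and> ell M' \<le> 2 \<and> (ell M = ell M' \<longrightarrow> ell M = 1)"
    using del_pattern_counts[OF p(1), of c] canonical[unfolded canonical_del_def] card_markers_window[of p 3 x]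
      card_markers_window[of p 2 y] p lx ly unfolding bits c_def by auto
  have "seg_weight m h M' < seg_weight m h M" if "ell M = ell M'"
  proof -
    have "length M \<le> D" using length_single_segment_block[OF x] dec counts that by blast
    then have "h M' < m" using dec e12 by (intro hash_lt) simp
    moreover have "length M = length M' + 1" using dec e12 by simp
    ultimately show ?thesis by (simp add: seg_weight_def)
  qed
  moreover have "1 \<le> ell M" "1 \<le> ell M'" using dec ell_pos by auto
  ultimately have "local_edit m h p x y A M M' B"
    unfolding local_edit_def using dec counts e1(1) e2(1) by auto
  then show ?thesis unfolding y_def by blast
qed

lemma card_swap_positions_le: "card (swap_positions C N y) \<le> 78 * D + 115"
proof (rule card_edit_positions_le)
  show "swap_positions C N y \<subseteq> {1..N}" by (auto simp: swap_positions_def)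
  fix j assume "j \<in> swap_positions C N y" "j + 5 \<le> N"
  then obtain x where "x \<in> C" "1 \<le> j" "swap_at x j = y" "x ! (j - 1) \<noteq> x ! j"
    unfolding swap_positions_def using swap_at_self by blast
  then show "\<exists>x\<in>C. \<exists>A M M' B. local_edit m h j x y A M M' B"
    using swap_local_edit \<open>j + 5 \<le> N\<close> by blast
qed

lemma card_del_positions_le: "card (del_positions C N y) \<le> 78 * D + 115"
proof (rule card_edit_positions_le)
  show "del_positions C N y \<subseteq> {1..N}" by (auto simp: del_positions_def)
  fix j assume "j \<in> del_positions C N y" "j + 5 \<le> N"
  then obtain x where "x \<in> C" "1 \<le> j" "del_at x j = y" "canonical_del x j"
    unfolding del_positions_def by blast
  then show "\<exists>x\<in>C. \<exists>A M M' B. local_edit m h j x y A M M' B"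
    using del_local_edit[of x j] \<open>j + 5 \<le> N\<close> by fastforce
qed

end

lemma marker_code_of_is_code:
  assumes n: "n = 2 ^ k" and good: "good_hash n h" and code: "is_code n h C"
    and C: "C \<subseteq> Cprime n h s0 s1 s2" and ne: "C \<noteq> {}"
  shows "marker_code n (50 + 1000 * k) (1000 * (50 + 1000 * k)\<^sup>2) (fmod n) h C s0"
proof -
  define D m where "D = 50 + 1000 * k" and "m = 1000 * D\<^sup>2"
  have Delta: "Delta n = real D" using n by (simp add: Delta_def D_def)
  have mreal: "mreal n = real m" by (simp add: mreal_def Delta m_def)
  have mnat: "mnat n = m" by (simp add: mnat_def mreal)
  have "fmod n = nat \<lfloor>real (10 * n * D * m + 1)\<rfloor>" by (simp add: fmod_def Delta mreal)
  then have fmod: "fmod n = 10 * n * D * m + 1" by (simp only: floor_of_nat nat_int)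
  have codeword: "length x = n \<and> 4 \<le> n \<and> drop (n - 4) x = marker \<and> f_sk n h x = s0
      \<and> (\<forall>z\<in>set (segs x). real (length z) \<le> Delta n)" if "x \<in> C" for x
    using C that by (auto simp: Cprime_def)
  have "4 \<le> n" using ne codeword by blast
  have "marker_code n D m (fmod n) h C s0"
  proof
    fix z :: "bool list" assume "length z \<le> 3 * D"
    then have "real (length z) \<le> 3 * Delta n" using Delta by simp
    then have "real (h z) \<le> real m - 1" using good mreal by (simp add: good_hash_def)
    then show "h z < m" by linarith
  next
    fix z z' :: "bool list"
    assume "length z \<le> 3 * D" "length z' \<le> 3 * D" "adj_trans_step z z'" "z' \<noteq> z"
    then show "h z \<noteq> h z'" using good by (simp add: good_hash_def Delta le2_adj_trans_def)
  next
    have "50 \<le> D" by (simp add: D_def)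
    moreover have "n * 7 \<le> n * D" using \<open>50 \<le> D\<close> by (intro mult_le_mono2) simp
    moreover have "4 * D \<le> n * D" using \<open>4 \<le> n\<close> by (rule mult_le_mono1)
    ultimately have "(7 * n + 18 * D + 18) * m \<le> (10 * (n * D)) * m"
      by (intro mult_le_mono1) linarith
    then show "7 * n * m + (18 * D + 18) * m < fmod n" by (simp add: fmod algebra_simps)
  next
    fix x assume "x \<in> C"
    then show "length x = n" "marker_at x n" "index_weight m h (segs x) mod fmod n = s0"
      using codeword marker_at_length_iff[of x] by (auto simp: f_sk_eq_index_weight mnat)
    show "z \<in> set (segs x) \<Longrightarrow> length z \<le> D" for z using codeword[OF \<open>x \<in> C\<close>] Delta by fastforce
  next
    fix x x' assume "x \<in> C" "x' \<in> C" "hash_mset h x \<noteq> hash_mset h x'"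
    then show "10 \<le> mset_symdiff_size (hash_mset h x) (hash_mset h x')"
      using code by (auto simp: is_code_def)
  qed
  then show ?thesis by (simp add: D_def m_def)
qed

lemma card_bound_le_quartic:
  fixes k :: nat
  assumes "1 \<le> k"
  shows "78 * (50 + 1000 * k) + 115 \<le> 10 ^ 10 * k ^ 4"
proof -
  have "k \<le> k ^ 4" using self_le_power[of k 4] assms by simp
  then show ?thesis using assms by simp
qed

theorem theorem4:
  fixes n k :: nat and h :: "bool list \<Rightarrow> nat" and C :: "bool list set"
  assumes "n = 2 ^ k"
    and "good_hash n h"
    and "is_code n h C"
  shows "\<exists>W :: bool list \<Rightarrow> nat set.
     (\<forall>y. (length y = n - 1 \<or> length y = n) \<longrightarrow>
          W y \<subseteq> {1..n} \<and> real (card (W y)) \<le> 10 ^ 10 * (log 2 (real n)) ^ 4) \<and>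
     (\<forall>x \<in> C.
        (\<forall>p \<in> {1..n}. \<exists>q \<in> W (del_at x p). del_at x q = del_at x p) \<and>
        (\<forall>j. 1 \<le> j \<and> j < n \<and> swap_at x j \<noteq> x \<longrightarrow> j \<in> W (swap_at x j)))"
proof -
  obtain s0 s1 s2 where C: "C \<subseteq> Cprime n h s0 s1 s2" using assms(3) by (auto simp: is_code_def)
  have len: "length x = n" "4 \<le> n" if "x \<in> C" for x using C that by (auto simp: Cprime_def)
  define W where "W y = (if length y = n then swap_positions C n y else del_positions C n y)" for y
  have card_W: "real (card (W y)) \<le> 10 ^ 10 * (log 2 (real n)) ^ 4" for y
  proof (cases "C = {}")
    case False
    interpret marker_code n "50 + 1000 * k" "1000 * (50 + 1000 * k)\<^sup>2" "fmod n" h C s0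
      by (rule marker_code_of_is_code[OF assms C False])
    from False obtain x where "x \<in> C" by blast
    then have "1 \<le> k" using len assms(1) by (cases k) auto
    then have "card (W y) \<le> 10 ^ 10 * k ^ 4"
      using card_swap_positions_le card_del_positions_le card_bound_le_quartic
      by (simp add: W_def) (meson le_trans)
    then have "real (card (W y)) \<le> real (10 ^ 10 * k ^ 4)" by (simp only: of_nat_le_iff)
    then show ?thesis using assms(1) by simp
  qed (simp add: W_def swap_positions_def del_positions_def)
  have W_range: "W y \<subseteq> {1..n}" for y by (auto simp: W_def swap_positions_def del_positions_def)
  have W_del: "\<exists>q \<in> W (del_at x p). del_at x q = del_at x p" if "x \<in> C" "p \<in> {1..n}" for x p
    using canonical_del_exists[of p x] that len[OF that(1)]
    by (fastforce simp: W_def del_positions_def del_at_def)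
  have W_swap: "j \<in> W (swap_at x j)" if "x \<in> C" "1 \<le> j \<and> j < n \<and> swap_at x j \<noteq> x" for x j
    using that len by (auto simp: W_def swap_positions_def swap_at_def)
  show ?thesis
    using card_W W_range W_del W_swap by (intro exI[of _ W]) blast
qed

end
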